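(* In the isotropic setting below, fix $r>0$, $F,F_p\in\mathrm{GL}^+(3)$. Then the set-valued right-hand sides of the Simo–Miehe flow rule and of the Lion flow rule coincide: $$-2\,F^{-1}\big[\mathcal N_r(\tau_e)\,B_e\big]F^{-T}\;=\;-F_p^{-1}\,\mathcal N_r(\Sigma_e)\,F_p^{-T}.$$ Consequently, a differentiable curve $t\mapsto C_p(t)=F_p(t)^TF_p(t)$ (at fixed $F$) satisfies the Simo–Miehe flow rule $\frac{d}{dt}[C_p^{-1}]\in-2F^{-1}[\mathcal N_r(\tau_e)B_e]F^{-T}$ if and only if it satisfies the Lion flow rule $\frac{d}{dt}[C_p^{-1}]\in-F_p^{-1}\mathcal N_r(\Sigma_e)F_p^{-T}$.
   Context: $W:\mathrm{GL}^+(3)\to\mathbb{R}$ is $C^1$, objective and isotropic ($W(QFR)=W(F)$ for all $Q,R\in\mathrm{SO}(3)$). $F_e=FF_p^{-1}$, $C_p=F_p^TF_p$, $B_e=F_eF_e^T$, $\Sigma_e=F_e^TDW(F_e)$, $\tau_e=DW(F_e)F_e^T$ (symmetric for isotropic $W$). $\langle X,Y\rangle=\mathrm{tr}(XY^T)$, $\|\cdot\|$ Frobenius norm, $\mathrm{dev}_3X=X-\frac13\mathrm{tr}(X)\mathbb{1}$. For $r>0$ and symmetric $S$, $\mathcal N_r(S)$ is the subdifferential of the indicator function of the convex set $\{S\in\mathrm{Sym}(3):\|\mathrm{dev}_3S\|\le r\}$ evaluated as in the paper: $\mathcal N_r(S)=\{0\}$ if $\|\mathrm{dev}_3S\|<r$,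 $\mathcal N_r(S)=\{\lambda\,\mathrm{dev}_3S/\|\mathrm{dev}_3S\|:\lambda\ge0\}$ if $\|\mathrm{dev}_3S\|=r$, and $\mathcal N_r(S)=\emptyset$ if $\|\mathrm{dev}_3S\|>r$. For matrices $M,N$ and a set $\mathcal A$ of matrices, $M\mathcal AN=\{MXN:X\in\mathcal A\}$. *)

theory Defs
  imports "HOL-Analysis.Analysis"
begin

type_synonym mat3 = "real^3^3"

definition GLp :: "mat3 set" where
  "GLp = {F. det F > 0}"

definition dev3 :: "mat3 \<Rightarrow> mat3" where
  "dev3 X = X - (trace X / 3) *\<^sub>R mat 1"

text \<open>Normal cone of the indicator of the set of matrices with norm of deviator at most r,
  evaluated as in the paper (Frobenius norm = norm on real^3^3).\<close>
definition Ncone :: "real \<Rightarrow> mat3 \<Rightarrow> mat3 set" where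
  "Ncone r S =
     (if norm (dev3 S) < r then {0}
      else if norm (dev3 S) = r then {l *\<^sub>R (dev3 S /\<^sub>R norm (dev3 S)) | l. l \<ge> 0}
      else {})"

text \<open>Elastic kinematic quantities; DW is the derivative (gradient) of W.\<close>
definition Fe :: "mat3 \<Rightarrow> mat3 \<Rightarrow> mat3" where
  "Fe F Fp = F ** matrix_inv Fp"

definition Cp :: "mat3 \<Rightarrow> mat3" where
  "Cp Fp = transpose Fp ** Fp"

definition Be :: "mat3 \<Rightarrow> mat3 \<Rightarrow> mat3" where
  "Be F Fp = Fe F Fp ** transpose (Fe F Fp)"

definition Sigma_e :: "(mat3 \<Rightarrow> mat3) \<Rightarrow> mat3 \<Rightarrow> mat3 \<Rightarrow> mat3" where
  "Sigma_e DW F Fp = transpose (Fe F Fp) ** DW (Fe F Fp)"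

definition tau_e :: "(mat3 \<Rightarrow> mat3) \<Rightarrow> mat3 \<Rightarrow> mat3 \<Rightarrow> mat3" where
  "tau_e DW F Fp = DW (Fe F Fp) ** transpose (Fe F Fp)"

definition SM_rhs :: "(mat3 \<Rightarrow> mat3) \<Rightarrow> real \<Rightarrow> mat3 \<Rightarrow> mat3 \<Rightarrow> mat3 set" where
  "SM_rhs DW r F Fp =
     (\<lambda>X. (-2) *\<^sub>R (matrix_inv F ** (X ** Be F Fp) ** transpose (matrix_inv F)))
       ` Ncone r (tau_e DW F Fp)"

definition Lion_rhs :: "(mat3 \<Rightarrow> mat3) \<Rightarrow> real \<Rightarrow> mat3 \<Rightarrow> mat3 \<Rightarrow> mat3 set" where
  "Lion_rhs DW r F Fp =
     (\<lambda>X. - (matrix_inv Fp ** X ** transpose (matrix_inv Fp)))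
       ` Ncone r (Sigma_e DW F Fp)"

end

theory Submission
  imports Defs
begin

(*
  Write E = F Fp^{-1} for the elastic part and Ei = Fp F^{-1} for its inverse.  The proof
  rests on two facts.
  (1) Isotropy makes both stress tensors symmetric: differentiating W(Q G) = W(G) and
      W(G Q) = W(G) along one-parameter rotation groups Q(t) in the three coordinate planes
      shows that DW(G) G^T and G^T DW(G) are orthogonal to every skew matrix.
  (2) Symmetry of tau_e = DW(E) E^T and Sigma_e = E^T DW(E) gives the similarity
      Sigma_e = Ei tau_e E.  Since dev3 commutes with similarity and the Frobenius norm of
      similar symmetric matrices agrees (it is the trace of the square), the normal cone is
      transported: N_r(Sigma_e) = Ei N_r(tau_e) E.
  The Simo--Miehe map X |-> -2 F^{-1} X B_e F^{-T} factors as the Lion map applied to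
  2 Ei X E; as normal cones are invariant under positive scaling, both right-hand sides
  coincide.  The statement about flow curves follows pointwise.
*)

lemma matrix_mul_add_rdistrib: "((A::'a::semiring_1^'n^'m) + B) ** C = A ** C + B ** C"
  by (vector matrix_matrix_mult_def sum.distrib[symmetric] field_simps)

lemma matrix_mul_diff_rdistrib: "((A::'a::ring_1^'n^'m) - B) ** C = A ** C - B ** C"
  by (vector matrix_matrix_mult_def sum_subtractf[symmetric] field_simps)

lemma matrix_mul_diff_ldistrib: "(A::'a::ring_1^'n^'m) ** (B - C) = A ** B - A ** C"
  by (vector matrix_matrix_mult_def sum_subtractf[symmetric] field_simps)

lemma matrix_mul_scaleR_left: "(k *\<^sub>R (A::real^'n^'m)) ** B = k *\<^sub>R (A ** B)"
  by (simp add: scalar_matrix_assoc)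

lemma matrix_mul_scaleR_right: "(A::real^'n^'m) ** (k *\<^sub>R B) = k *\<^sub>R (A ** B)"
  by (simp add: matrix_scalar_ac scalar_matrix_assoc)

lemma matrix_inv_two_sided:
  assumes "invertible (A::real^'n^'n)"
  shows "A ** matrix_inv A = mat 1" and "matrix_inv A ** A = mat 1"
proof -
  have "\<exists>A'. A ** A' = mat 1 \<and> A' ** A = mat 1"
    using assms unfolding invertible_def by blast
  then have "A ** matrix_inv A = mat 1 \<and> matrix_inv A ** A = mat 1"
    unfolding matrix_inv_def by (rule someI_ex)
  then show "A ** matrix_inv A = mat 1" and "matrix_inv A ** A = mat 1" by auto
qed

lemma GLp_invertible: "A \<in> GLp \<Longrightarrow> invertible A"
  unfolding GLp_def using invertible_det_nz by force

lemma inner_matrix_trace: "(X::real^'n^'n) \<bullet> Y = trace (X ** transpose Y)"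
  by (simp add: inner_vec_def trace_def matrix_matrix_mult_def transpose_def)

text \<open>Moving a factor of the second argument of the Frobenius inner product to the first
  one; this turns left/right rotations of \<open>G\<close> into tests on \<open>D G^T\<close> and \<open>G^T D\<close>.\<close>
lemma inner_mult_left_factor:
  fixes D K G :: "real^'n^'n"
  shows "D \<bullet> (K ** G) = (D ** transpose G) \<bullet> K"
  unfolding inner_matrix_trace by (simp add: matrix_transpose_mul matrix_mul_assoc)

lemma inner_mult_right_factor:
  fixes D K G :: "real^'n^'n"
  shows "D \<bullet> (G ** K) = (transpose G ** D) \<bullet> K"
  unfolding inner_matrix_trace matrix_transpose_mul
  using trace_mul_sym[of "D ** transpose K" "transpose G"] by (simp add: matrix_mul_assoc)

section \<open>Rotations in the coordinate planes\<close>

definition plane_proj :: "3 \<Rightarrow> 3 \<Rightarrow> mat3" where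
  "plane_proj a b = (\<chi> i j. if (i = a \<and> j = a) \<or> (i = b \<and> j = b) then 1 else 0)"

definition plane_skew :: "3 \<Rightarrow> 3 \<Rightarrow> mat3" where
  "plane_skew a b = (\<chi> i j. if i = a \<and> j = b then -1 else if i = b \<and> j = a then 1 else 0)"

definition plane_rotation :: "3 \<Rightarrow> 3 \<Rightarrow> real \<Rightarrow> mat3" where
  "plane_rotation a b t = mat 1 + (cos t - 1) *\<^sub>R plane_proj a b + sin t *\<^sub>R plane_skew a b"

lemma plane_rotation_is_rotation:
  assumes "a \<noteq> b"
  shows "rotation_matrix (plane_rotation a b t)"
proof -
  have planes: "(a = 1 \<and> b = 2) \<or> (a = 1 \<and> b = 3) \<or> (a = 2 \<and> b = 1) \<or>
      (a = 2 \<and> b = 3) \<or> (a = 3 \<and> b = 1) \<or> (a = 3 \<and> b = 2)"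
    using assms exhaust_3[of a] exhaust_3[of b] by auto
  have pythagoras: "sin t * sin t + cos t * cos t = 1"
    using sin_cos_squared_add[of t] by (simp add: power2_eq_square)
  show ?thesis
    unfolding rotation_matrix_def orthogonal_matrix using planes
    by (auto simp: plane_rotation_def plane_proj_def plane_skew_def vec_eq_iff forall_3 sum_3
        det_3 matrix_matrix_mult_def transpose_def mat_def algebra_simps pythagoras)
qed

lemma trig_curve_derivative:
  "((\<lambda>t. G + (cos t - 1) *\<^sub>R X + sin t *\<^sub>R (Y::mat3)) has_vector_derivative Y) (at 0)"
proof -
  have "((\<lambda>t. G + (cos t - 1) *\<^sub>R X + sin t *\<^sub>R Y) has_vector_derivative
      (0 + (- sin 0) *\<^sub>R X + cos 0 *\<^sub>R Y)) (at 0)"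
    by (intro derivative_eq_intros) auto
  then show ?thesis by simp
qed

lemma rotation_left_derivative:
  "((\<lambda>t. plane_rotation a b t ** (G::mat3)) has_vector_derivative (plane_skew a b ** G)) (at 0)"
proof -
  have curve: "(\<lambda>t. plane_rotation a b t ** G) = (\<lambda>t.
      G + (cos t - 1) *\<^sub>R (plane_proj a b ** G) + sin t *\<^sub>R (plane_skew a b ** G))"
    unfolding plane_rotation_def by (simp add: matrix_mul_add_rdistrib matrix_mul_scaleR_left)
  show ?thesis unfolding curve by (rule trig_curve_derivative)
qed

lemma rotation_right_derivative:
  "((\<lambda>t. (G::mat3) ** plane_rotation a b t) has_vector_derivative (G ** plane_skew a b)) (at 0)"
proof -
  have curve: "(\<lambda>t. G ** plane_rotation a b t) = (\<lambda>t.
      G + (cos t - 1) *\<^sub>R (G ** plane_proj a b) + sin t *\<^sub>R (G ** plane_skew a b))"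
    unfolding plane_rotation_def by (simp add: matrix_add_ldistrib matrix_mul_scaleR_right)
  show ?thesis unfolding curve by (rule trig_curve_derivative)
qed

lemma plane_rotation_zero: "plane_rotation a b 0 = mat 1"
  by (simp add: plane_rotation_def)

lemma symmetric_if_orthogonal_to_skew:
  fixes M :: mat3
  assumes "\<And>a b. a \<noteq> b \<Longrightarrow> M \<bullet> plane_skew a b = 0"
  shows "transpose M = M"
proof -
  have "M \<bullet> plane_skew 1 2 = 0" "M \<bullet> plane_skew 1 3 = 0" "M \<bullet> plane_skew 2 3 = 0"
    using assms by simp_all
  then show ?thesis
    by (simp add: plane_skew_def vec_eq_iff forall_3 sum_3 transpose_def inner_vec_def)
qed

section \<open>Isotropy yields symmetric stresses\<close>

lemma derivative_vanishes_on_level_curve: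
  fixes c :: "real \<Rightarrow> 'a::real_normed_vector" and W :: "'a \<Rightarrow> real"
  assumes W': "(W has_derivative L) (at (c 0))"
    and c': "(c has_vector_derivative Y) (at 0)"
    and level: "\<And>t. W (c t) = W (c 0)"
  shows "L Y = 0"
proof -
  have "((W \<circ> c) has_derivative (L \<circ> (\<lambda>h. h *\<^sub>R Y))) (at 0)"
    using diff_chain_at c' W' unfolding has_vector_derivative_def by blast
  moreover have "W \<circ> c = (\<lambda>t. W (c 0))" by (rule ext) (metis comp_apply level)
  ultimately have "((\<lambda>t. W (c 0)) has_derivative (L \<circ> (\<lambda>h. h *\<^sub>R Y))) (at 0)" by simp
  then have "L \<circ> (\<lambda>h. h *\<^sub>R Y) = (\<lambda>h. 0)"
    using has_derivative_const has_derivative_unique by blast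
  then show ?thesis by (metis comp_apply scaleR_one)
qed

lemma isotropic_stresses_symmetric:
  fixes W :: "mat3 \<Rightarrow> real" and DW :: "mat3 \<Rightarrow> mat3"
  assumes deriv: "\<And>G. G \<in> GLp \<Longrightarrow> (W has_derivative (\<lambda>H. DW G \<bullet> H)) (at G)"
    and isotropic: "\<And>Q R G. rotation_matrix Q \<Longrightarrow> rotation_matrix R \<Longrightarrow> G \<in> GLp \<Longrightarrow>
                       W (Q ** G ** R) = W G"
    and G: "G \<in> GLp"
  shows "transpose (DW G ** transpose G) = DW G ** transpose G"
    and "transpose (transpose G ** DW G) = transpose G ** DW G"
proof -
  have id_rot: "rotation_matrix (mat 1 :: mat3)"
    unfolding rotation_matrix_def orthogonal_matrix by simp
  show "transpose (DW G ** transpose G) = DW G ** transpose G"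
  proof (rule symmetric_if_orthogonal_to_skew)
    fix a b :: 3 assume ab: "a \<noteq> b"
    let ?c = "\<lambda>t. plane_rotation a b t ** G"
    have "DW G \<bullet> (plane_skew a b ** G) = 0"
    proof (rule derivative_vanishes_on_level_curve[where c = ?c])
      show "(W has_derivative (\<bullet>) (DW G)) (at (?c 0))"
        using deriv[OF G] by (simp add: plane_rotation_zero)
      show "W (?c t) = W (?c 0)" for t
        using isotropic[OF plane_rotation_is_rotation[OF ab] id_rot G]
        by (simp add: plane_rotation_zero)
    qed (rule rotation_left_derivative)
    then show "(DW G ** transpose G) \<bullet> plane_skew a b = 0"
      by (simp add: inner_mult_left_factor)
  qed
  show "transpose (transpose G ** DW G) = transpose G ** DW G"
  proof (rule symmetric_if_orthogonal_to_skew)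
    fix a b :: 3 assume ab: "a \<noteq> b"
    let ?c = "\<lambda>t. G ** plane_rotation a b t"
    have "DW G \<bullet> (G ** plane_skew a b) = 0"
    proof (rule derivative_vanishes_on_level_curve[where c = ?c])
      show "(W has_derivative (\<bullet>) (DW G)) (at (?c 0))"
        using deriv[OF G] by (simp add: plane_rotation_zero)
      show "W (?c t) = W (?c 0)" for t
        using isotropic[OF id_rot plane_rotation_is_rotation[OF ab] G]
        by (simp add: plane_rotation_zero)
    qed (rule rotation_right_derivative)
    then show "(transpose G ** DW G) \<bullet> plane_skew a b = 0"
      by (simp add: inner_mult_right_factor)
  qed
qed

section \<open>Similarity and the normal cone\<close>

lemma symmetric_stresses_similar:
  fixes D E Ei :: mat3
  assumes sym_tau: "transpose (D ** transpose E) = D ** transpose E"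
    and sym_Sigma: "transpose (transpose E ** D) = transpose E ** D"
    and inv: "Ei ** E = mat 1"
  shows "Ei ** (D ** transpose E) ** E = transpose E ** D"
proof -
  have "D ** transpose E = E ** transpose D"
    using sym_tau by (simp add: matrix_transpose_mul)
  then have "Ei ** (D ** transpose E) ** E = (Ei ** E) ** transpose D ** E"
    by (simp add: matrix_mul_assoc)
  also have "\<dots> = transpose (transpose E ** D)"
    using inv by (simp add: matrix_transpose_mul)
  finally show ?thesis using sym_Sigma by simp
qed

text \<open>The deviator commutes with similarity transformations (the trace is invariant).\<close>
lemma dev3_similar:
  fixes T E Ei :: mat3
  assumes "Ei ** E = mat 1" and "E ** Ei = mat 1"
  shows "Ei ** dev3 T ** E = dev3 (Ei ** T ** E)"
proof -
  have "trace (Ei ** T ** E) = trace (E ** (Ei ** T))" by (rule trace_mul_sym)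
  also have "\<dots> = trace T" using assms(2) by (simp add: matrix_mul_assoc)
  finally have "trace (Ei ** T ** E) = trace T" .
  then show ?thesis unfolding dev3_def
    using assms(1) by (simp add: matrix_mul_diff_rdistrib matrix_mul_diff_ldistrib
        matrix_mul_scaleR_right matrix_mul_scaleR_left)
qed

lemma dev3_symmetric: "transpose (X::mat3) = X \<Longrightarrow> transpose (dev3 X) = dev3 X"
  unfolding dev3_def by (simp add: transpose_def vec_eq_iff mat_def)

text \<open>Similar symmetric matrices have the same Frobenius norm, since
  \<open>\<parallel>S\<parallel>\<^sup>2 = tr (S\<^sup>2)\<close> is a similarity invariant for symmetric \<open>S\<close>.\<close>
lemma norm_similar_symmetric:
  fixes S T E Ei :: mat3
  assumes inv: "E ** Ei = mat 1"
    and sym_S: "transpose S = S" and sym_T: "transpose T = T"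
    and similar: "S = Ei ** T ** E"
  shows "norm S = norm T"
proof -
  have "S ** S = Ei ** T ** (E ** Ei) ** T ** E"
    unfolding similar by (simp only: matrix_mul_assoc)
  also have "\<dots> = Ei ** (T ** T) ** E" using inv by (simp add: matrix_mul_assoc)
  finally have "S \<bullet> S = trace (Ei ** (T ** T) ** E)"
    using sym_S by (simp add: inner_matrix_trace)
  also have "\<dots> = trace (E ** (Ei ** (T ** T)))" by (rule trace_mul_sym)
  also have "\<dots> = T \<bullet> T" using inv sym_T by (simp add: matrix_mul_assoc inner_matrix_trace)
  finally show ?thesis by (simp add: norm_eq_sqrt_inner)
qed

lemma image_ray: "f ` {l *\<^sub>R u | l::real. l \<ge> 0} = {f (l *\<^sub>R u) | l. l \<ge> 0}"
  by auto

lemma Ncone_similar: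
  fixes S T E Ei :: mat3
  assumes inv1: "Ei ** E = mat 1" and inv2: "E ** Ei = mat 1"
    and sym_S: "transpose S = S" and sym_T: "transpose T = T"
    and similar: "S = Ei ** T ** E"
  shows "Ncone r S = (\<lambda>X. Ei ** X ** E) ` Ncone r T"
proof -
  have dev: "dev3 S = Ei ** dev3 T ** E"
    using dev3_similar[OF inv1 inv2] similar by simp
  define n where "n = norm (dev3 T)"
  have nS: "norm (dev3 S) = n"
    unfolding n_def by (rule norm_similar_symmetric[OF inv2 dev3_symmetric[OF sym_S]
          dev3_symmetric[OF sym_T] dev])
  have ray: "Ei ** (l *\<^sub>R (dev3 T /\<^sub>R n)) ** E = l *\<^sub>R (dev3 S /\<^sub>R n)" for l
    by (simp add: dev matrix_mul_scaleR_left matrix_mul_scaleR_right)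
  consider "n < r" | "n = r" | "n > r" by linarith
  then show ?thesis
  proof cases
    case 2
    have cone_S: "Ncone r S = {l *\<^sub>R (dev3 S /\<^sub>R n) | l. l \<ge> 0}"
      unfolding Ncone_def nS using 2 by simp
    have cone_T: "Ncone r T = {l *\<^sub>R (dev3 T /\<^sub>R n) | l. l \<ge> 0}"
      unfolding Ncone_def n_def[symmetric] using 2 by simp
    show ?thesis by (simp only: cone_S cone_T image_ray ray)
  qed (simp_all add: Ncone_def nS n_def[symmetric])
qed

lemma Ncone_scale:
  assumes c: "c > 0"
  shows "(\<lambda>X. c *\<^sub>R X) ` Ncone r S = Ncone r S"
proof -
  have scaled_ray: "{c *\<^sub>R (l *\<^sub>R u) | l. l \<ge> 0} = {l *\<^sub>R u | l::real. l \<ge> 0}" for u :: mat3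
  proof (intro set_eqI iffI)
    fix x assume "x \<in> {c *\<^sub>R (l *\<^sub>R u) | l. l \<ge> 0}"
    then obtain l where "l \<ge> 0" "x = (c * l) *\<^sub>R u" by auto
    moreover have "c * l \<ge> 0" using c \<open>l \<ge> 0\<close> by simp
    ultimately show "x \<in> {l *\<^sub>R u | l. l \<ge> 0}" by blast
  next
    fix x assume "x \<in> {l *\<^sub>R u | l. l \<ge> 0}"
    then obtain l where "l \<ge> 0" "x = c *\<^sub>R ((l / c) *\<^sub>R u)" using c by auto
    moreover have "l / c \<ge> 0" using c \<open>l \<ge> 0\<close> by simp
    ultimately show "x \<in> {c *\<^sub>R (l *\<^sub>R u) | l. l \<ge> 0}" by blast
  qed
  consider "norm (dev3 S) < r" | "norm (dev3 S) = r" | "norm (dev3 S) > r" by linarith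
  then show ?thesis
  proof cases
    case 2
    then have cone: "Ncone r S = {l *\<^sub>R (dev3 S /\<^sub>R norm (dev3 S)) | l. l \<ge> 0}"
      unfolding Ncone_def by simp
    show ?thesis by (simp only: cone image_ray scaled_ray)
  qed (simp_all add: Ncone_def)
qed

lemma elastic_part_inverse:
  assumes F: "F \<in> GLp" and Fp: "Fp \<in> GLp"
  defines "Ei \<equiv> Fp ** matrix_inv F"
  shows "Fe F Fp \<in> GLp" and "Ei ** Fe F Fp = mat 1" and "Fe F Fp ** Ei = mat 1"
    and "matrix_inv F = matrix_inv Fp ** Ei"
proof -
  note F_inv = matrix_inv_two_sided[OF GLp_invertible[OF F]]
  note Fp_inv = matrix_inv_two_sided[OF GLp_invertible[OF Fp]]
  have "det (matrix_inv Fp) * det Fp = 1"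
    using Fp_inv(2) det_mul[of "matrix_inv Fp" Fp] by simp
  then have "det (matrix_inv Fp) > 0"
    using Fp unfolding GLp_def by (metis zero_less_mult_pos2 zero_less_one mem_Collect_eq)
  then show "Fe F Fp \<in> GLp"
    using F unfolding GLp_def Fe_def by (simp add: det_mul)
  have "Ei ** Fe F Fp = Fp ** (matrix_inv F ** F) ** matrix_inv Fp"
    unfolding Ei_def Fe_def by (simp only: matrix_mul_assoc)
  then show "Ei ** Fe F Fp = mat 1" using F_inv Fp_inv by simp
  have "Fe F Fp ** Ei = F ** (matrix_inv Fp ** Fp) ** matrix_inv F"
    unfolding Ei_def Fe_def by (simp only: matrix_mul_assoc)
  then show "Fe F Fp ** Ei = mat 1" using F_inv Fp_inv by simp
  have "matrix_inv Fp ** Ei = (matrix_inv Fp ** Fp) ** matrix_inv F"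
    unfolding Ei_def by (simp only: matrix_mul_assoc)
  then show "matrix_inv F = matrix_inv Fp ** Ei" using Fp_inv by simp
qed

lemma simo_miehe_map_factorization:
  assumes F: "F \<in> GLp" and Fp: "Fp \<in> GLp"
  defines "E \<equiv> Fe F Fp" and "Ei \<equiv> Fp ** matrix_inv F" and "Fpi \<equiv> matrix_inv Fp"
  shows "(-2) *\<^sub>R (matrix_inv F ** (X ** Be F Fp) ** transpose (matrix_inv F))
      = - (Fpi ** (2 *\<^sub>R (Ei ** X ** E)) ** transpose Fpi)"
proof -
  note kin = elastic_part_inverse[OF F Fp, folded E_def Ei_def Fpi_def]
  have "transpose E ** transpose (matrix_inv F) = transpose (matrix_inv F ** E)"
    by (simp add: matrix_transpose_mul)
  also have "matrix_inv F ** E = Fpi ** (Ei ** E)"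
    unfolding kin(4) by (simp add: matrix_mul_assoc)
  finally have E_Finv: "transpose E ** transpose (matrix_inv F) = transpose Fpi"
    using kin(2) by simp
  have "matrix_inv F ** (X ** (E ** transpose E)) ** transpose (matrix_inv F)
      = matrix_inv F ** X ** E ** (transpose E ** transpose (matrix_inv F))"
    by (simp only: matrix_mul_assoc)
  also have "\<dots> = matrix_inv F ** X ** E ** transpose Fpi" by (simp only: E_Finv)
  also have "\<dots> = Fpi ** (Ei ** X ** E) ** transpose Fpi"
    unfolding kin(4) by (simp only: matrix_mul_assoc)
  finally show ?thesis
    unfolding Be_def E_def[symmetric]
    by (simp add: matrix_mul_scaleR_left matrix_mul_scaleR_right)
qed

lemma simo_miehe_rhs_eq_lion_rhs:
  fixes W :: "mat3 \<Rightarrow> real" and DW :: "mat3 \<Rightarrow> mat3"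
  assumes deriv: "\<And>G. G \<in> GLp \<Longrightarrow> (W has_derivative (\<lambda>H. DW G \<bullet> H)) (at G)"
    and isotropic: "\<And>Q R G. rotation_matrix Q \<Longrightarrow> rotation_matrix R \<Longrightarrow> G \<in> GLp \<Longrightarrow>
                       W (Q ** G ** R) = W G"
    and F: "F \<in> GLp" and Fp: "Fp \<in> GLp"
  shows "SM_rhs DW r F Fp = Lion_rhs DW r F Fp"
proof -
  define E where "E = Fe F Fp"
  define Ei where "Ei = Fp ** matrix_inv F"
  note kin = elastic_part_inverse[OF F Fp, folded E_def Ei_def]
  define tau where "tau = tau_e DW F Fp"
  define Sigma where "Sigma = Sigma_e DW F Fp"
  have sym_tau: "transpose tau = tau" and sym_Sigma: "transpose Sigma = Sigma"
    using isotropic_stresses_symmetric[OF deriv isotropic kin(1)]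
    unfolding tau_def Sigma_def tau_e_def Sigma_e_def E_def by auto
  have similar: "Sigma = Ei ** tau ** E"
    using symmetric_stresses_similar[OF _ _ kin(2)] sym_tau sym_Sigma
    unfolding tau_def Sigma_def tau_e_def Sigma_e_def E_def by simp
  define lion where "lion = (\<lambda>Y. - (matrix_inv Fp ** Y ** transpose (matrix_inv Fp)))"
  have "SM_rhs DW r F Fp = lion ` (\<lambda>X. 2 *\<^sub>R X) ` (\<lambda>X. Ei ** X ** E) ` Ncone r tau"
    unfolding SM_rhs_def simo_miehe_map_factorization[OF F Fp] tau_def[symmetric]
      E_def[symmetric] Ei_def[symmetric] lion_def
    by (simp add: image_image)
  also have "\<dots> = lion ` (\<lambda>X. 2 *\<^sub>R X) ` Ncone r Sigma"
    by (simp only: Ncone_similar[OF kin(2,3) sym_Sigma sym_tau similar])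
  also have "\<dots> = lion ` Ncone r Sigma"
    by (simp only: Ncone_scale[of 2] zero_less_numeral)
  also have "\<dots> = Lion_rhs DW r F Fp"
    unfolding Lion_rhs_def lion_def Sigma_def ..
  finally show ?thesis .
qed

theorem mainTheorem6:
  fixes W :: "mat3 \<Rightarrow> real" and DW :: "mat3 \<Rightarrow> mat3"
    and r :: real and F Fp :: mat3
  assumes deriv: "\<And>G. G \<in> GLp \<Longrightarrow> (W has_derivative (\<lambda>H. DW G \<bullet> H)) (at G)"
    and C1: "continuous_on GLp DW"
    and isotropic: "\<And>Q R G. rotation_matrix Q \<Longrightarrow> rotation_matrix R \<Longrightarrow> G \<in> GLp \<Longrightarrow>
                       W (Q ** G ** R) = W G"
    and r_pos: "r > 0"
    and F_GL: "F \<in> GLp"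
    and Fp_GL: "Fp \<in> GLp"
  shows "SM_rhs DW r F Fp = Lion_rhs DW r F Fp \<and>
    (\<forall>(T :: real set) (Fpc :: real \<Rightarrow> mat3) (D :: real \<Rightarrow> mat3).
       (\<forall>t\<in>T. Fpc t \<in> GLp) \<longrightarrow>
       (\<forall>t\<in>T. ((\<lambda>s. matrix_inv (Cp (Fpc s))) has_vector_derivative D t) (at t within T)) \<longrightarrow>
       ((\<forall>t\<in>T. D t \<in> SM_rhs DW r F (Fpc t)) \<longleftrightarrow> (\<forall>t\<in>T. D t \<in> Lion_rhs DW r F (Fpc t))))"
proof -
  have rhs_eq: "SM_rhs DW r F G = Lion_rhs DW r F G" if "G \<in> GLp" for G
    using simo_miehe_rhs_eq_lion_rhs[OF deriv isotropic F_GL that] .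
  then show ?thesis using Fp_GL by auto
qed

end
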